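(* Let $I\subset S=K[x_1,\dots,x_t]$ be an $\mathfrak m$-primary monomial ideal with $v(I)=\alpha(I)-1$. Then $v(I^{n+1})=v(I)+n\,\alpha(I)$ for all $n\ge 1$.
   Context: $K$ is a field, $S$ is standard graded and $\mathfrak m=\langle x_1,\dots,x_t\rangle$. For a proper graded ideal $J$, the $v$-number is $v(J)=\min\{k\ge 0 : \exists f\in S_k,\ \mathcal P\in\operatorname{Ass}(S/J) \text{ with } (J:f)=\mathcal P\}$. $\alpha(I)=\min\{\deg f : f\in I\setminus\{0\} \text{ homogeneous}\}$. *)

theory Defs
  imports "HOL-Library.Poly_Mapping"
begin

text \<open>Polynomial ring S = K[x_v : v in 'v] over a field K, with finitely many
variables indexed by the finite type 'v (so t = CARD('v)).\<close>

type_synonym ('v, 'k) mpoly = "('v \<Rightarrow>\<^sub>0 nat) \<Rightarrow>\<^sub>0 'k"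

definition is_ideal :: "'a::comm_ring_1 set \<Rightarrow> bool" where
  "is_ideal J \<longleftrightarrow> 0 \<in> J \<and> (\<forall>a\<in>J. \<forall>b\<in>J. a + b \<in> J) \<and> (\<forall>r. \<forall>a\<in>J. r * a \<in> J)"

definition ideal_gen :: "'a::comm_ring_1 set \<Rightarrow> 'a set" where
  "ideal_gen G = \<Inter>{J. is_ideal J \<and> G \<subseteq> J}"

definition prime_ideal :: "'a::comm_ring_1 set \<Rightarrow> bool" where
  "prime_ideal P \<longleftrightarrow> is_ideal P \<and> P \<noteq> UNIV \<and> (\<forall>a b. a * b \<in> P \<longrightarrow> a \<in> P \<or> b \<in> P)"

definition radical :: "'a::comm_ring_1 set \<Rightarrow> 'a set" where
  "radical J = {f. \<exists>n. f ^ n \<in> J}"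

definition colon :: "'a::comm_ring_1 set \<Rightarrow> 'a \<Rightarrow> 'a set" where
  "colon J f = {g. g * f \<in> J}"

text \<open>Ass(S/J): primes of the form Ann(f + J) = (J : f)\<close>
definition Ass :: "'a::comm_ring_1 set \<Rightarrow> 'a set set" where
  "Ass J = {P. prime_ideal P \<and> (\<exists>f. P = colon J f)}"

fun ideal_pow :: "'a::comm_ring_1 set \<Rightarrow> nat \<Rightarrow> 'a set" where
  "ideal_pow I 0 = UNIV"
| "ideal_pow I (Suc n) = ideal_gen {a * b | a b. a \<in> I \<and> b \<in> ideal_pow I n}"

definition mdeg :: "('v \<Rightarrow>\<^sub>0 nat) \<Rightarrow> nat" where
  "mdeg m = (\<Sum>v\<in>Poly_Mapping.keys m. Poly_Mapping.lookup m v)"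

definition homogeneous :: "nat \<Rightarrow> ('v, 'k::zero) mpoly \<Rightarrow> bool" where
  "homogeneous k f \<longleftrightarrow> (\<forall>m\<in>Poly_Mapping.keys f. mdeg m = k)"

definition var :: "'v \<Rightarrow> ('v, 'k::{zero,one}) mpoly" where
  "var v = Poly_Mapping.single (Poly_Mapping.single v 1) 1"

definition monomial_poly :: "('v, 'k::{zero,one}) mpoly \<Rightarrow> bool" where
  "monomial_poly f \<longleftrightarrow> (\<exists>m. f = Poly_Mapping.single m 1)"

definition monomial_ideal :: "('v, 'k::comm_ring_1) mpoly set \<Rightarrow> bool" where
  "monomial_ideal I \<longleftrightarrow> (\<exists>G. (\<forall>g\<in>G. monomial_poly g) \<and> I = ideal_gen G)"

definition max_ideal :: "('v, 'k::comm_ring_1) mpoly set" where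
  "max_ideal = ideal_gen (range var)"

definition m_primary :: "('v, 'k::comm_ring_1) mpoly set \<Rightarrow> bool" where
  "m_primary I \<longleftrightarrow> is_ideal I \<and> I \<noteq> UNIV \<and> radical I = max_ideal"

definition v_number :: "('v, 'k::comm_ring_1) mpoly set \<Rightarrow> nat" where
  "v_number J = (LEAST k. \<exists>f P. homogeneous k f \<and> P \<in> Ass J \<and> colon J f = P)"

definition alpha :: "('v, 'k::comm_ring_1) mpoly set \<Rightarrow> nat" where
  "alpha I = (LEAST d. \<exists>f\<in>I. f \<noteq> 0 \<and> homogeneous d f)"

end

theory Submission
  imports Defs
begin

text \<open>
Let \<open>a = \<alpha>(I)\<close>. As \<open>I\<close> is generated by monomials of degree at least \<open>a\<close>, every term of
every element of \<open>J = I\<^sup>n\<^sup>+\<^sup>1\<close> has degree at least \<open>(n+1)a\<close>. If \<open>(J : h)\<close> is an associated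
prime, it contains \<open>J\<close> and hence, \<open>I\<close> being \<open>m\<close>-primary, every variable \<open>x\<^sub>i\<close>; as \<open>x\<^sub>i h\<close> is
then a nonzero element of \<open>J\<close>, \<open>deg h \<ge> (n+1)a - 1\<close>. Conversely, take \<open>g\<close> homogeneous of
degree \<open>v(I) = a - 1\<close> with \<open>(I : g)\<close> prime, so that \<open>x\<^sub>i g \<in> I\<close> for all \<open>i\<close>, and a monomial
\<open>u \<in> I\<close> of degree \<open>a\<close>. Then \<open>u\<^sup>n g\<close> has degree \<open>(n+1)a - 1\<close>, so \<open>u\<^sup>n g \<notin> J\<close> while
\<open>x\<^sub>i u\<^sup>n g \<in> J\<close>; thus \<open>(J : u\<^sup>n g)\<close> is the prime ideal \<open>m\<close> of polynomials without constant
term, and \<open>v(J) \<le> (n+1)a - 1\<close>.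
\<close>

lemma is_ideal_ideal_gen: "is_ideal (ideal_gen G)"
  unfolding is_ideal_def ideal_gen_def by auto

lemma ideal_gen_superset: "G \<subseteq> ideal_gen G"
  unfolding ideal_gen_def by auto

lemma ideal_gen_minimal: "is_ideal J \<Longrightarrow> G \<subseteq> J \<Longrightarrow> ideal_gen G \<subseteq> J"
  unfolding ideal_gen_def by auto

lemma ideal_zero: "is_ideal J \<Longrightarrow> 0 \<in> J"
  unfolding is_ideal_def by auto

lemma ideal_add: "is_ideal J \<Longrightarrow> a \<in> J \<Longrightarrow> b \<in> J \<Longrightarrow> a + b \<in> J"
  unfolding is_ideal_def by auto

lemma ideal_mult_left: "is_ideal J \<Longrightarrow> a \<in> J \<Longrightarrow> r * a \<in> J"
  unfolding is_ideal_def by auto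

lemma ideal_mult_right: "is_ideal J \<Longrightarrow> a \<in> J \<Longrightarrow> a * r \<in> J"
  using ideal_mult_left by (metis mult.commute)

lemma ideal_diff: "is_ideal J \<Longrightarrow> a \<in> J \<Longrightarrow> b \<in> J \<Longrightarrow> a - b \<in> J"
  using ideal_add[of J a "(- 1) * b"] ideal_mult_left[of J b "- 1"] by simp

lemma ideal_sum: "is_ideal J \<Longrightarrow> (\<And>x. x \<in> A \<Longrightarrow> f x \<in> J) \<Longrightarrow> sum f A \<in> J"
  by (induction A rule: infinite_finite_induct) (auto simp: ideal_zero ideal_add)

lemma ideal_eq_UNIV_iff_one: "is_ideal J \<Longrightarrow> J = UNIV \<longleftrightarrow> 1 \<in> J"
  using ideal_mult_left[of J 1] by force

lemma is_ideal_ideal_pow: "is_ideal (ideal_pow I n)"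
  by (cases n) (simp_all add: is_ideal_ideal_gen, simp add: is_ideal_def)

lemma mult_in_ideal_pow: "a \<in> I \<Longrightarrow> b \<in> ideal_pow I n \<Longrightarrow> a * b \<in> ideal_pow I (Suc n)"
  using ideal_gen_superset by fastforce

lemma ideal_pow_1:
  assumes "is_ideal I"
  shows "ideal_pow I 1 = I"
proof
  show "ideal_pow I 1 \<subseteq> I"
    unfolding One_nat_def ideal_pow.simps
    by (rule ideal_gen_minimal[OF assms]) (auto intro: ideal_mult_right[OF assms])
  show "I \<subseteq> ideal_pow I 1"
    using mult_in_ideal_pow[of _ I 1 0] by auto
qed

lemma power_in_ideal_pow: "a \<in> I \<Longrightarrow> a ^ n \<in> ideal_pow I n"
  using ideal_gen_superset by (induction n) fastforce+

lemma is_ideal_colon: "is_ideal J \<Longrightarrow> is_ideal (colon J f)"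
  unfolding is_ideal_def colon_def by (auto simp: distrib_right mult.assoc)

lemma ideal_subset_colon: "is_ideal J \<Longrightarrow> J \<subseteq> colon J f"
  unfolding colon_def using ideal_mult_right by blast

lemma colon_eq_UNIV_iff: "is_ideal J \<Longrightarrow> colon J f = UNIV \<longleftrightarrow> f \<in> J"
  using ideal_eq_UNIV_iff_one[OF is_ideal_colon] by (simp add: colon_def)

lemma prime_ideal_power_imp:
  assumes "prime_ideal P" "a ^ n \<in> P"
  shows "a \<in> P"
  using assms(2)
proof (induction n)
  case 0
  then show ?case
    using assms(1) ideal_eq_UNIV_iff_one by (auto simp: prime_ideal_def)
next
  case (Suc n)
  then show ?case
    using assms(1) by (auto simp: prime_ideal_def)
qed

section \<open>Monomials and degrees\<close>

lemma mdeg_eq_sum: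
  "finite A \<Longrightarrow> Poly_Mapping.keys m \<subseteq> A \<Longrightarrow> mdeg m = (\<Sum>v\<in>A. Poly_Mapping.lookup m v)"
  unfolding mdeg_def by (rule sum.mono_neutral_left) (auto simp: in_keys_iff)

lemma mdeg_add: "mdeg (a + b) = mdeg a + mdeg b"
proof -
  let ?A = "Poly_Mapping.keys a \<union> Poly_Mapping.keys b"
  have "Poly_Mapping.keys (a + b) \<subseteq> ?A"
    by (rule keys_add)
  then show ?thesis
    by (simp add: mdeg_eq_sum[of ?A] lookup_add sum.distrib)
qed

lemma mdeg_single: "mdeg (Poly_Mapping.single v k) = k"
  by (simp add: mdeg_def)

lemma mdeg_eq_0_iff: "mdeg m = 0 \<longleftrightarrow> m = 0"
  by (auto simp: mdeg_def in_keys_iff intro!: poly_mapping_eqI)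

lemma lookup_single_mult:
  "Poly_Mapping.lookup (Poly_Mapping.single m c * f) (m + k) = c * Poly_Mapping.lookup f k"
  for f :: "'a::cancel_comm_monoid_add \<Rightarrow>\<^sub>0 'b::comm_ring_1"
  by (simp add: lookup_mult lookup_single when_mult)

lemma keys_single_mult:
  "Poly_Mapping.keys (Poly_Mapping.single m 1 * f) = (\<lambda>k. m + k) ` Poly_Mapping.keys f"
  for f :: "'a::cancel_comm_monoid_add \<Rightarrow>\<^sub>0 'b::comm_ring_1"
proof
  show "Poly_Mapping.keys (Poly_Mapping.single m 1 * f) \<subseteq> (\<lambda>k. m + k) ` Poly_Mapping.keys f"
    using keys_mult[of "Poly_Mapping.single m 1" f] by (auto split: if_splits)
  show "(\<lambda>k. m + k) ` Poly_Mapping.keys f \<subseteq> Poly_Mapping.keys (Poly_Mapping.single m 1 * f)"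
    using lookup_single_mult[of m 1 f] by (auto simp: in_keys_iff)
qed

lemma single_eq_0_iff: "Poly_Mapping.single m c = 0 \<longleftrightarrow> c = 0"
  by (metis lookup_single_eq lookup_zero single_zero)

lemma single_mult_eq_0_iff: "Poly_Mapping.single m 1 * f = 0 \<longleftrightarrow> f = 0"
  for f :: "('v, 'k::comm_ring_1) mpoly"
  by (metis keys_eq_empty image_is_empty keys_single_mult)

lemma homogeneous_single_mult:
  "homogeneous k f \<Longrightarrow> homogeneous (mdeg m + k) (Poly_Mapping.single m 1 * f)"
  for f :: "('v, 'k::comm_ring_1) mpoly"
  by (auto simp: homogeneous_def keys_single_mult mdeg_add)

lemma homogeneous_monomial: "homogeneous (mdeg m) (Poly_Mapping.single m c)"
  by (simp add: homogeneous_def)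

lemma var_power:
  "(var w :: ('v, 'k::comm_ring_1) mpoly) ^ k = Poly_Mapping.single (Poly_Mapping.single w k) 1"
  by (induction k) (simp_all add: var_def mult_single flip: single_add)

lemma single_eq_mult_var_power:
  assumes "j \<le> Poly_Mapping.lookup m w"
  shows "(Poly_Mapping.single m c :: ('v, 'k::comm_ring_1) mpoly)
           = Poly_Mapping.single (m - Poly_Mapping.single w j) c * var w ^ j"
proof -
  have "m = (m - Poly_Mapping.single w j) + Poly_Mapping.single w j"
    using assms by (intro poly_mapping_eqI) (auto simp: lookup_add lookup_minus lookup_single when_def)
  then show ?thesis
    by (metis var_power mult_single mult.right_neutral)
qed

lemma mdeg_pos_if_monomial_in_proper_ideal:
  assumes "is_ideal I" "I \<noteq> UNIV" "Poly_Mapping.single m 1 \<in> I"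
  shows "mdeg m > 0"
  using assms ideal_eq_UNIV_iff_one[OF assms(1)] by (auto simp: mdeg_eq_0_iff)

definition degree_at_least :: "nat \<Rightarrow> ('v, 'k::comm_ring_1) mpoly set" where
  "degree_at_least d = {h. \<forall>m\<in>Poly_Mapping.keys h. d \<le> mdeg m}"

lemma degree_at_least_mult:
  "a \<in> degree_at_least c \<Longrightarrow> b \<in> degree_at_least d \<Longrightarrow> a * b \<in> degree_at_least (c + d)"
  unfolding degree_at_least_def using keys_mult[of a b] by (fastforce simp: mdeg_add intro: add_mono)

lemma is_ideal_degree_at_least: "is_ideal (degree_at_least d)"
  unfolding is_ideal_def
proof (intro conjI ballI allI)
  show "0 \<in> degree_at_least d"
    by (simp add: degree_at_least_def)
  show "a + b \<in> degree_at_least d" if "a \<in> degree_at_least d" "b \<in> degree_at_least d" for a b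
    using that keys_add[of a b] unfolding degree_at_least_def by blast
  show "r * a \<in> degree_at_least d" if "a \<in> degree_at_least d" for r a
    using degree_at_least_mult[OF _ that, of r 0] by (simp add: degree_at_least_def)
qed

lemma ideal_pow_subset_degree_at_least:
  assumes "I \<subseteq> degree_at_least a"
  shows "ideal_pow I n \<subseteq> degree_at_least (n * a)"
proof (induction n)
  case 0
  then show ?case by (simp add: degree_at_least_def)
next
  case (Suc n)
  have "x * y \<in> degree_at_least (Suc n * a)" if "x \<in> I" "y \<in> ideal_pow I n" for x y
    using degree_at_least_mult[of x a y "n * a"] that assms Suc.IH by auto
  then show ?case
    by (auto intro!: ideal_gen_minimal[OF is_ideal_degree_at_least])
qed

lemma homogeneous_degree_at_least_imp_le:
  assumes "homogeneous k f" "f \<noteq> 0" "f \<in> degree_at_least d"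
  shows "d \<le> k"
proof -
  obtain m where "m \<in> Poly_Mapping.keys f"
    using assms(2) by fastforce
  then show ?thesis
    using assms(1,3) by (auto simp: homogeneous_def degree_at_least_def)
qed

section \<open>The maximal ideal\<close>

lemma lookup_mult_at_0:
  "Poly_Mapping.lookup (a * b :: ('v, 'k::comm_ring_1) mpoly) 0
     = Poly_Mapping.lookup a 0 * Poly_Mapping.lookup b 0"
proof -
  have sum_eq_0: "(0::'v \<Rightarrow>\<^sub>0 nat) = l + q \<longleftrightarrow> l = 0 \<and> q = 0" for l q
    by (metis add.right_neutral add_is_0 lookup_add lookup_zero poly_mapping_eqI)
  have "(\<Sum>q. Poly_Mapping.lookup b q when 0 = l + q) = (Poly_Mapping.lookup b 0 when l = 0)" for l
    by (cases "l = 0") (simp_all add: sum_eq_0)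
  then show ?thesis
    by (simp add: lookup_mult mult_when)
qed

lemma poly_mapping_sum_single:
  "h = (\<Sum>m\<in>Poly_Mapping.keys h. Poly_Mapping.single m (Poly_Mapping.lookup h m))"
  for h :: "'a \<Rightarrow>\<^sub>0 'b::comm_monoid_add"
proof -
  have "finite A \<Longrightarrow> Poly_Mapping.lookup (\<Sum>m\<in>A. Poly_Mapping.single m (Poly_Mapping.lookup h m)) j
          = (if j \<in> A then Poly_Mapping.lookup h j else 0)" for A j
    by (induction A rule: finite_induct) (auto simp: lookup_single lookup_add when_def)
  then show ?thesis
    by (intro poly_mapping_eqI) (fastforce simp: in_keys_iff)
qed

lemma is_ideal_max_ideal: "is_ideal max_ideal"
  unfolding max_ideal_def by (rule is_ideal_ideal_gen)

lemma var_in_max_ideal: "var w \<in> max_ideal"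
  unfolding max_ideal_def using ideal_gen_superset by blast

lemma max_ideal_eq: "max_ideal = {h :: ('v, 'k::comm_ring_1) mpoly. Poly_Mapping.lookup h 0 = 0}"
proof
  show "max_ideal \<subseteq> {h :: ('v, 'k) mpoly. Poly_Mapping.lookup h 0 = 0}"
    unfolding max_ideal_def
    by (intro ideal_gen_minimal)
      (auto simp: is_ideal_def lookup_add lookup_mult_at_0 var_def lookup_single when_def
        single_eq_0_iff)
  have monomial: "Poly_Mapping.single m c \<in> (max_ideal :: ('v, 'k) mpoly set)" if "m \<noteq> 0" for m c
  proof -
    obtain w where "Poly_Mapping.lookup m w \<noteq> 0"
      using \<open>m \<noteq> 0\<close> by (metis lookup_zero poly_mapping_eqI)
    then have "Poly_Mapping.single m c = Poly_Mapping.single (m - Poly_Mapping.single w 1) c * var w"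
      using single_eq_mult_var_power[of 1 m w c] by simp
    then show ?thesis
      by (simp add: ideal_mult_left[OF is_ideal_max_ideal var_in_max_ideal])
  qed
  show "{h :: ('v, 'k) mpoly. Poly_Mapping.lookup h 0 = 0} \<subseteq> max_ideal"
  proof
    fix h :: "('v, 'k) mpoly"
    assume "h \<in> {h. Poly_Mapping.lookup h 0 = 0}"
    then have "(\<Sum>m\<in>Poly_Mapping.keys h. Poly_Mapping.single m (Poly_Mapping.lookup h m)) \<in> max_ideal"
      by (intro ideal_sum[OF is_ideal_max_ideal] monomial) (auto simp: in_keys_iff)
    then show "h \<in> max_ideal"
      by (subst poly_mapping_sum_single)
  qed
qed

lemma prime_ideal_max_ideal: "prime_ideal (max_ideal :: ('v, 'k::idom) mpoly set)"
  unfolding prime_ideal_def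
proof (intro conjI allI impI)
  show "is_ideal (max_ideal :: ('v, 'k) mpoly set)"
    by (rule is_ideal_max_ideal)
  have "(1 :: ('v, 'k) mpoly) \<notin> max_ideal"
    by (simp add: max_ideal_eq)
  then show "(max_ideal :: ('v, 'k) mpoly set) \<noteq> UNIV"
    by blast
  show "a \<in> max_ideal \<or> b \<in> max_ideal" if "a * b \<in> max_ideal" for a b :: "('v, 'k) mpoly"
    using that by (simp add: max_ideal_eq lookup_mult_at_0)
qed

lemma ideal_containing_vars_eq_max_ideal:
  fixes Q :: "('v, 'k::field) mpoly set"
  assumes Q: "is_ideal Q" and vars: "\<And>w. var w \<in> Q" and proper: "Q \<noteq> UNIV"
  shows "Q = max_ideal"
proof -
  have max_sub: "max_ideal \<subseteq> Q"
    unfolding max_ideal_def by (rule ideal_gen_minimal[OF Q]) (auto intro: vars)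
  moreover have "Q \<subseteq> max_ideal"
  proof
    fix h assume "h \<in> Q"
    let ?c = "Poly_Mapping.lookup h 0"
    have "h - Poly_Mapping.single 0 ?c \<in> max_ideal"
      by (simp add: max_ideal_eq lookup_minus)
    then have "h - (h - Poly_Mapping.single 0 ?c) \<in> Q"
      using max_sub \<open>h \<in> Q\<close> by (blast intro: ideal_diff[OF Q])
    then have "Poly_Mapping.single 0 (inverse ?c) * Poly_Mapping.single 0 ?c \<in> Q"
      by (simp add: ideal_mult_left[OF Q])
    then have "?c = 0"
      using proper ideal_eq_UNIV_iff_one[OF Q] by (auto simp: mult_single)
    then show "h \<in> max_ideal"
      by (simp add: max_ideal_eq)
  qed
  ultimately show ?thesis
    by blast
qed

lemma m_primary_var_power: "m_primary I \<Longrightarrow> \<exists>k. var w ^ k \<in> I"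
  using var_in_max_ideal[of w] unfolding m_primary_def radical_def by blast

lemma m_primary_neq_zero: "m_primary (I :: ('v, 'k::comm_ring_1) mpoly set) \<Longrightarrow> I \<noteq> {0}"
  using m_primary_var_power by (fastforce simp: var_power single_eq_0_iff)

lemma m_primary_vars_in_prime:
  assumes "m_primary I" "prime_ideal P" "ideal_pow I n \<subseteq> P"
  shows "var w \<in> P"
proof -
  obtain k where "var w ^ k \<in> I"
    using m_primary_var_power[OF assms(1)] by blast
  then have "var w ^ (k * n) \<in> P"
    using power_in_ideal_pow assms(3) by (fastforce simp: power_mult)
  then show ?thesis
    using prime_ideal_power_imp[OF assms(2)] by blast
qed

lemma m_primary_socle_monomial:
  fixes I :: "('v::finite, 'k::comm_ring_1) mpoly set"
  assumes "m_primary I"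
  obtains m where "Poly_Mapping.single m 1 \<notin> I" "\<And>w. var w * Poly_Mapping.single m 1 \<in> I"
proof -
  have I: "is_ideal I" and "I \<noteq> UNIV"
    using assms by (auto simp: m_primary_def)
  obtain k where k: "\<And>w. var w ^ k w \<in> I"
    using m_primary_var_power[OF assms] by metis
  let ?out = "\<lambda>m. Poly_Mapping.single m (1::'k) \<notin> I"
  have bounded: "mdeg m < Suc (\<Sum>w\<in>UNIV. k w)" if "?out m" for m
  proof -
    have "Poly_Mapping.lookup m w < k w" for w
    proof (rule ccontr)
      assume "\<not> Poly_Mapping.lookup m w < k w"
      then have "Poly_Mapping.single m (1::'k)
                   = Poly_Mapping.single (m - Poly_Mapping.single w (k w)) 1 * var w ^ k w"
        by (intro single_eq_mult_var_power) simp
      then show False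
        using that ideal_mult_left[OF I k] by metis
    qed
    then show ?thesis
      by (simp add: mdeg_eq_sum[of UNIV] less_Suc_eq_le sum_mono less_imp_le)
  qed
  have "?out 0"
    using \<open>I \<noteq> UNIV\<close> ideal_eq_UNIV_iff_one[OF I] by simp
  then obtain m where m: "?out m" and maximal: "\<And>m'. ?out m' \<Longrightarrow> mdeg m' \<le> mdeg m"
    using Lattices_Big.ex_has_greatest_nat[of ?out 0 mdeg] bounded by blast
  have "var w * Poly_Mapping.single m 1 \<in> I" for w
    using maximal[of "Poly_Mapping.single w 1 + m"]
    by (auto simp: var_def mult_single mdeg_add mdeg_single)
  with m that show ?thesis by blast
qed

section \<open>Socle elements and the v-number\<close>

lemma colon_socle_eq_max_ideal:
  fixes J :: "('v, 'k::field) mpoly set"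
  assumes "is_ideal J" "f \<notin> J" "\<And>w. var w * f \<in> J"
  shows "colon J f = max_ideal"
proof (rule ideal_containing_vars_eq_max_ideal)
  show "is_ideal (colon J f)"
    using assms(1) by (rule is_ideal_colon)
  show "var w \<in> colon J f" for w
    using assms(3) by (simp add: colon_def)
  show "colon J f \<noteq> UNIV"
    using assms(1,2) by (simp add: colon_eq_UNIV_iff)
qed

lemma v_number_le_socle_degree:
  fixes J :: "('v, 'k::field) mpoly set"
  assumes "is_ideal J" "homogeneous k f" "f \<notin> J" "\<And>w. var w * f \<in> J"
  shows "v_number J \<le> k"
  unfolding v_number_def
  using assms colon_socle_eq_max_ideal[OF assms(1,3,4)] prime_ideal_max_ideal
  by (auto simp: Ass_def intro!: Least_le)

lemma v_number_attained:
  fixes J :: "('v, 'k::field) mpoly set"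
  assumes "is_ideal J" "homogeneous k f" "f \<notin> J" "\<And>w. var w * f \<in> J"
  obtains h where "homogeneous (v_number J) h" "prime_ideal (colon J h)"
proof -
  have "\<exists>f P. homogeneous k f \<and> P \<in> Ass J \<and> colon J f = P"
    using assms colon_socle_eq_max_ideal[OF assms(1,3,4)] prime_ideal_max_ideal
    by (auto simp: Ass_def)
  then have "\<exists>h P. homogeneous (v_number J) h \<and> P \<in> Ass J \<and> colon J h = P"
    unfolding v_number_def by (rule LeastI)
  with that show ?thesis
    by (auto simp: Ass_def)
qed

lemma socle_of_prime_colon:
  assumes "m_primary I" "is_ideal J" "ideal_pow I n \<subseteq> J" "prime_ideal (colon J h)"
  shows "h \<notin> J" "var w * h \<in> J"
proof -
  show "h \<notin> J"
    using assms(4) colon_eq_UNIV_iff[OF assms(2)] by (auto simp: prime_ideal_def)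
  have "var w \<in> colon J h"
    using m_primary_vars_in_prime[OF assms(1,4)] assms(3) ideal_subset_colon[OF assms(2)] by blast
  then show "var w * h \<in> J"
    by (simp add: colon_def)
qed

lemma socle_degree_lower_bound:
  assumes "J \<subseteq> degree_at_least d" "homogeneous k h" "h \<noteq> 0" "var w * h \<in> J"
  shows "d \<le> k + 1"
proof -
  have "homogeneous (1 + k) (var w * h)"
    using homogeneous_single_mult[OF assms(2), of "Poly_Mapping.single w 1"]
    by (simp add: var_def mdeg_single)
  moreover have "var w * h \<noteq> 0"
    using assms(3) by (simp add: var_def single_mult_eq_0_iff)
  ultimately show ?thesis
    using homogeneous_degree_at_least_imp_le assms(1,4) by fastforce
qed

lemma v_number_eq_socle_degree:
  fixes J :: "('v, 'k::field) mpoly set"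
  assumes "m_primary I" "is_ideal J" "ideal_pow I n \<subseteq> J" "J \<subseteq> degree_at_least (k + 1)"
    and "homogeneous k f" "f \<noteq> 0" "\<And>w. var w * f \<in> J"
  shows "v_number J = k"
proof -
  have "f \<notin> J"
    using homogeneous_degree_at_least_imp_le[OF assms(5,6)] assms(4) by fastforce
  then have "v_number J \<le> k"
    by (rule v_number_le_socle_degree[OF assms(2,5) _ assms(7)])
  obtain h where h: "homogeneous (v_number J) h" "prime_ideal (colon J h)"
    by (rule v_number_attained[OF assms(2,5) \<open>f \<notin> J\<close> assms(7)])
  have h_socle: "h \<notin> J" "\<And>w. var w * h \<in> J"
    using socle_of_prime_colon[OF assms(1-3) h(2)] by auto
  have "h \<noteq> 0"
    using h_socle(1) ideal_zero[OF assms(2)] by blast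
  then have "k + 1 \<le> v_number J + 1"
    by (rule socle_degree_lower_bound[OF assms(4) h(1) _ h_socle(2)])
  with \<open>v_number J \<le> k\<close> show ?thesis
    by simp
qed

lemma m_primary_v_number_socle:
  fixes I :: "('v::finite, 'k::field) mpoly set"
  assumes "m_primary I"
  obtains g where "homogeneous (v_number I) g" "g \<notin> I" "\<And>w. var w * g \<in> I"
proof -
  have I: "is_ideal I"
    using assms by (simp add: m_primary_def)
  obtain m where "Poly_Mapping.single m 1 \<notin> I" "\<And>w. var w * Poly_Mapping.single m 1 \<in> I"
    using m_primary_socle_monomial[OF assms] by blast
  then obtain g where g: "homogeneous (v_number I) g" "prime_ideal (colon I g)"
    using v_number_attained[OF I homogeneous_monomial] by blast
  then show ?thesis
    using socle_of_prime_colon[OF assms I ideal_pow_1[OF I, THEN equalityD1] g(2)] that by blast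
qed

lemma monomial_ideal_alpha:
  fixes I :: "('v, 'k::comm_ring_1) mpoly set"
  assumes "monomial_ideal I" "I \<noteq> {0}"
  shows "I \<subseteq> degree_at_least (alpha I)"
    and "\<exists>m. Poly_Mapping.single m 1 \<in> I \<and> mdeg m = alpha I"
proof -
  obtain G where G: "\<And>g. g \<in> G \<Longrightarrow> monomial_poly g" and I: "I = ideal_gen G"
    using assms(1) by (auto simp: monomial_ideal_def)
  have "G \<noteq> {}"
    using assms(2) ideal_gen_minimal[of "{0}" G] ideal_zero[OF is_ideal_ideal_gen, of G]
    by (auto simp: I is_ideal_def)
  then obtain c where c: "\<exists>m. Poly_Mapping.single m 1 \<in> G \<and> mdeg m = c"
    and c_min: "\<And>m. Poly_Mapping.single m 1 \<in> G \<Longrightarrow> c \<le> mdeg m"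
    using G ex_has_least_nat[of "\<lambda>m. Poly_Mapping.single m 1 \<in> G" _ mdeg]
    by (fastforce simp: monomial_poly_def)
  have "G \<subseteq> degree_at_least c"
  proof
    fix g assume "g \<in> G"
    then obtain m where "g = Poly_Mapping.single m 1"
      using G by (auto simp: monomial_poly_def)
    with c_min \<open>g \<in> G\<close> show "g \<in> degree_at_least c"
      by (simp add: degree_at_least_def)
  qed
  then have I_sub: "I \<subseteq> degree_at_least c"
    unfolding I by (rule ideal_gen_minimal[OF is_ideal_degree_at_least])
  obtain m0 where m0: "Poly_Mapping.single m0 1 \<in> I" "mdeg m0 = c"
    using c ideal_gen_superset unfolding I by blast
  have witness: "Poly_Mapping.single m0 1 \<in> I \<and> Poly_Mapping.single m0 (1::'k) \<noteq> 0
                   \<and> homogeneous c (Poly_Mapping.single m0 (1::'k))"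
    using m0 by (simp add: homogeneous_def single_eq_0_iff)
  then have "alpha I \<le> c"
    unfolding alpha_def by (blast intro: Least_le)
  moreover have "c \<le> alpha I"
  proof -
    have "\<exists>f\<in>I. f \<noteq> 0 \<and> homogeneous (alpha I) f"
      unfolding alpha_def by (rule LeastI) (use witness in blast)
    then show ?thesis
      using I_sub homogeneous_degree_at_least_imp_le by blast
  qed
  ultimately have "alpha I = c" by simp
  with I_sub m0 show "I \<subseteq> degree_at_least (alpha I)"
    and "\<exists>m. Poly_Mapping.single m 1 \<in> I \<and> mdeg m = alpha I" by auto
qed

lemma monomial_in_ideal_pow:
  assumes "Poly_Mapping.single m 1 \<in> I"
  shows "\<exists>m'. Poly_Mapping.single m' 1 \<in> ideal_pow I n \<and> mdeg m' = n * mdeg m"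
proof (induction n)
  case 0
  show ?case by (auto intro: exI[of _ 0] simp: mdeg_eq_0_iff)
next
  case (Suc n)
  then obtain m' where m': "Poly_Mapping.single m' 1 \<in> ideal_pow I n" "mdeg m' = n * mdeg m"
    by blast
  have "Poly_Mapping.single (m + m') 1 \<in> ideal_pow I (Suc n)"
    using mult_in_ideal_pow[OF assms m'(1)] by (simp only: mult_single mult_1)
  then show ?case
    using m'(2) by (auto simp: mdeg_add)
qed

theorem proposition4p10:
  fixes I :: "('v::finite, 'k::field) mpoly set"
  assumes "monomial_ideal I"
    and "m_primary I"
    and "v_number I = alpha I - 1"
    and "n \<ge> 1"
  shows "v_number (ideal_pow I (n + 1)) = v_number I + n * alpha I"
proof -
  have I: "is_ideal I" and proper: "I \<noteq> UNIV"
    using assms(2) by (auto simp: m_primary_def)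
  obtain u0 where I_deg: "I \<subseteq> degree_at_least (alpha I)"
    and u0: "Poly_Mapping.single u0 1 \<in> I" "mdeg u0 = alpha I"
    using monomial_ideal_alpha[OF assms(1) m_primary_neq_zero[OF assms(2)]] by blast
  \<comment> \<open>Needed because \<open>alpha I - 1\<close> in the hypothesis is truncated subtraction.\<close>
  have "alpha I \<ge> 1"
    using mdeg_pos_if_monomial_in_proper_ideal[OF I proper u0(1)] u0(2) by simp
  then have deg: "Suc n * alpha I = n * alpha I + v_number I + 1"
    using assms(3) by simp
  obtain u where u: "Poly_Mapping.single u 1 \<in> ideal_pow I n" "mdeg u = n * alpha I"
    using monomial_in_ideal_pow[OF u0(1), of n] unfolding u0(2) by blast
  obtain g where g: "homogeneous (v_number I) g" "g \<notin> I" "\<And>w. var w * g \<in> I"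
    using m_primary_v_number_socle[OF assms(2)] by blast
  define f where "f = Poly_Mapping.single u 1 * g"
  have "homogeneous (n * alpha I + v_number I) f"
    using homogeneous_single_mult[OF g(1), of u] u(2) by (simp add: f_def)
  moreover have "f \<noteq> 0"
    using g(2) ideal_zero[OF I] by (auto simp: f_def single_mult_eq_0_iff)
  moreover have "var w * f \<in> ideal_pow I (Suc n)" for w
    using mult_in_ideal_pow[OF g(3) u(1)] by (simp add: f_def ac_simps)
  moreover have "ideal_pow I (Suc n) \<subseteq> degree_at_least (n * alpha I + v_number I + 1)"
    using ideal_pow_subset_degree_at_least[OF I_deg, of "Suc n"] by (simp only: deg)
  ultimately have "v_number (ideal_pow I (Suc n)) = n * alpha I + v_number I"
    using v_number_eq_socle_degree[OF assms(2) is_ideal_ideal_pow order_refl] by blast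
  then show ?thesis
    by simp
qed

end
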